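(* Let $\mathcal{H}$ be an instance of $r$-Hypergraph Label Cover ($r\geq 2$), let $\mathcal{S}$ be an $(r,|C|,2)$-vector system, and let $G$ be the graph with vector costs obtained from $\mathcal{H}$ and $\mathcal{S}$ by the basic reduction (with $p=2$). (a) If some assignment satisfies all hyperedges of $\mathcal{H}$, then $G$ has an $s$-$t$ path $P$ with $\|\mathrm{cost}(P)\|_2^2=1$. (b) If every assignment weakly satisfies at most an $\varepsilon$-fraction of the hyperedges, then every $s$-$t$ path $P$ in $G$ satisfies $\|\mathrm{cost}(P)\|_2^2\geq 2-(1/r+2\varepsilon)$. (Norms are the scaled norms defined below.)
   Context: $r$-Hypergraph Label Cover: an $r$-partite hypergraph $\mathcal{H}=(V,\mathcal{E})$, $V=V_1\cup\dots\cup V_r$, each hyperedge containing exactly one vertex of each $V_j$; label set $L$; color set $C$; maps $\pi_h^u:L\to C$ for $h\in\mathcal{E}$, $u\in h$. For an assignment $\sigma:V\to L$, the color of $u$ in $h$ is $\pi_h^u(\sigma(u))$; $\sigma$ satisfies $h$ if all vertices of $h$ have the same color in $h$, and weakly satisfies $h$ if two distinct vertices of $h$ have the same color in $h$. Multilinear product: $\langle u_1,\dots,u_p\rangle=\sum_j\prod_i u_i(j)$. An $(r,q,p)$-vector system is a collection $\{v_j^c: j\in[r], c\in[q]\}$ of $rq$ distinct vectors in $\mathbb{R}^{d_0}$ (color of $v_j^c$ is $c$) such that for any $u_1,\dots,u_p$ from it (repetitions allowed), $\langle u_1,\dots,u_p\rangle=0$ if two distinct vectors in the list share a color, and otherwise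 $\langle u_1,\dots,u_p\rangle=r^{-t}$ with $t$ the number of distinct vectors in the list. Here colors are identified with $C$. Basic reduction: let $m=|\mathcal{E}|$ and $\mathcal{S}=\{v_j^c\}$ an $(r,|C|,p)$-vector system in $\mathbb{R}^{d_0}$. For each $u\in V$ create a block of $|L|$ parallel edges $e(u,l)$, $l\in L$, and compose all blocks in series (in arbitrary order) between $s$ and $t$; $s$-$t$ paths correspond bijectively to assignments via $P_\sigma=\{e(u,\sigma(u)):u\in V\}$. Costs lie in $\mathbb{R}^{d_0m}=\bigoplus_{h\in\mathcal{E}}\mathbb{R}^{d_0}$: $c(e(u,l))=\bigoplus_h c^h(e(u,l))$ with $c^h(e(u,l))=v_j^{\pi_h^u(l)}$ if $u\in h$ and $u\in V_j$, and $c^h(e(u,l))=0$ if $u\notin h$. $\mathrm{cost}(P)=\sum_{e\in P}c(e)$. On $\mathbb{R}^{d_0m}$ we use the scaled norm $\|x\|_p^p=\frac{1}{m}\sum_i|x_i|^p$. *)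

theory Defs
  imports "HOL-Analysis.Analysis"
begin

text \<open>Vertices V (finite), prt u gives
  the index j with u \<in> V_j. Hyperedges are indexed by a finite set E; vert h j is the unique
  vertex of hyperedge h lying in V_j. proj h u l is the projection map pi_h^u : L \<rightarrow> C.\<close>

definition hlc_instance ::
  "nat \<Rightarrow> 'v set \<Rightarrow> ('v \<Rightarrow> nat) \<Rightarrow> 'e set \<Rightarrow> ('e \<Rightarrow> nat \<Rightarrow> 'v)
   \<Rightarrow> 'l set \<Rightarrow> 'c set \<Rightarrow> ('e \<Rightarrow> 'v \<Rightarrow> 'l \<Rightarrow> 'c) \<Rightarrow> bool" where
  "hlc_instance r V prt E vert L C proj \<longleftrightarrow>
     finite V \<and> finite E \<and> finite L \<and> finite C \<and>
     (\<forall>u\<in>V. prt u < r) \<and>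
     (\<forall>h\<in>E. \<forall>j<r. vert h j \<in> V \<and> prt (vert h j) = j) \<and>
     (\<forall>h\<in>E. \<forall>j<r. \<forall>l\<in>L. proj h (vert h j) l \<in> C)"

definition in_hedge :: "nat \<Rightarrow> ('e \<Rightarrow> nat \<Rightarrow> 'v) \<Rightarrow> 'v \<Rightarrow> 'e \<Rightarrow> bool" where
  "in_hedge r vert u h \<longleftrightarrow> (\<exists>j<r. vert h j = u)"

definition assignment :: "'v set \<Rightarrow> 'l set \<Rightarrow> ('v \<Rightarrow> 'l) \<Rightarrow> bool" where
  "assignment V L \<sigma> \<longleftrightarrow> (\<forall>u\<in>V. \<sigma> u \<in> L)"

definition satisfies ::
  "nat \<Rightarrow> ('e \<Rightarrow> nat \<Rightarrow> 'v) \<Rightarrow> ('e \<Rightarrow> 'v \<Rightarrow> 'l \<Rightarrow> 'c) \<Rightarrow> ('v \<Rightarrow> 'l) \<Rightarrow> 'e \<Rightarrow> bool" where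
  "satisfies r vert proj \<sigma> h \<longleftrightarrow>
     (\<forall>j<r. \<forall>k<r. proj h (vert h j) (\<sigma> (vert h j)) = proj h (vert h k) (\<sigma> (vert h k)))"

definition weakly_satisfies ::
  "nat \<Rightarrow> ('e \<Rightarrow> nat \<Rightarrow> 'v) \<Rightarrow> ('e \<Rightarrow> 'v \<Rightarrow> 'l \<Rightarrow> 'c) \<Rightarrow> ('v \<Rightarrow> 'l) \<Rightarrow> 'e \<Rightarrow> bool" where
  "weakly_satisfies r vert proj \<sigma> h \<longleftrightarrow>
     (\<exists>j<r. \<exists>k<r. j \<noteq> k \<and> proj h (vert h j) (\<sigma> (vert h j)) = proj h (vert h k) (\<sigma> (vert h k)))"

definition mlprod :: "(real^'d) list \<Rightarrow> real" where
  "mlprod us = (\<Sum>i\<in>UNIV. prod_list (map (\<lambda>u. u $ i) us))"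

text \<open>(r,|C|,p)-vector system: vectors vs j c (j < r, c \<in> C) in R^d0, pairwise distinct,
  colour of vs j c is c.\<close>
definition vector_system :: "nat \<Rightarrow> 'c set \<Rightarrow> nat \<Rightarrow> (nat \<Rightarrow> 'c \<Rightarrow> real^'d) \<Rightarrow> bool" where
  "vector_system r C p vs \<longleftrightarrow>
     inj_on (\<lambda>(j, c). vs j c) ({..<r} \<times> C) \<and>
     (\<forall>xs. length xs = p \<and> set xs \<subseteq> {..<r} \<times> C \<longrightarrow>
        mlprod (map (\<lambda>(j, c). vs j c) xs) =
          (if \<exists>a\<in>set xs. \<exists>b\<in>set xs. a \<noteq> b \<and> snd a = snd b then 0
           else 1 / real r ^ card (set xs)))"

text \<open>Edges are pairs (u,l) standing for e(u,l). The graph is the series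
  composition of parallel blocks {e(u,l) : l \<in> L}, u \<in> V, so its s-t paths (as edge sets) are
  exactly the sets containing exactly one edge from each block.\<close>
definition st_path :: "'v set \<Rightarrow> 'l set \<Rightarrow> ('v \<times> 'l) set \<Rightarrow> bool" where
  "st_path V L P \<longleftrightarrow> P \<subseteq> V \<times> L \<and> (\<forall>u\<in>V. \<exists>!l. (u, l) \<in> P)"

text \<open>Cost vector of an edge, an element of the direct sum over hyperedges of R^d0,
  represented as a function 'e \<Rightarrow> real^'d (only h \<in> E matter).\<close>
definition edge_cost ::
  "nat \<Rightarrow> ('v \<Rightarrow> nat) \<Rightarrow> ('e \<Rightarrow> nat \<Rightarrow> 'v) \<Rightarrow> ('e \<Rightarrow> 'v \<Rightarrow> 'l \<Rightarrow> 'c)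
   \<Rightarrow> (nat \<Rightarrow> 'c \<Rightarrow> real^'d) \<Rightarrow> 'v \<times> 'l \<Rightarrow> 'e \<Rightarrow> real^'d" where
  "edge_cost r prt vert proj vs e h =
     (if in_hedge r vert (fst e) h then vs (prt (fst e)) (proj h (fst e) (snd e)) else 0)"

definition path_cost ::
  "nat \<Rightarrow> ('v \<Rightarrow> nat) \<Rightarrow> ('e \<Rightarrow> nat \<Rightarrow> 'v) \<Rightarrow> ('e \<Rightarrow> 'v \<Rightarrow> 'l \<Rightarrow> 'c)
   \<Rightarrow> (nat \<Rightarrow> 'c \<Rightarrow> real^'d) \<Rightarrow> ('v \<times> 'l) set \<Rightarrow> 'e \<Rightarrow> real^'d" where
  "path_cost r prt vert proj vs P = (\<lambda>h. \<Sum>e\<in>P. edge_cost r prt vert proj vs e h)"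

definition scaled_norm :: "real \<Rightarrow> 'e set \<Rightarrow> ('e \<Rightarrow> real^'d) \<Rightarrow> real" where
  "scaled_norm p E x =
     ((1 / real (card E)) * (\<Sum>h\<in>E. \<Sum>i\<in>UNIV. \<bar>x h $ i\<bar> powr p)) powr (1 / p)"

end

theory Submission
  imports Defs
begin

text \<open>
  Let P be an s-t path and \<sigma> the labelling it induces. The block of cost(P) at a hyperedge h is
  the sum over j < r of v_j^{c_j}, where c_j is the colour of the j-th vertex of h. Expanding its
  squared norm with the pairwise identities of the vector system gives
  1 + #{(j, k) : c_j \<noteq> c_k} / r^2. This equals 1 when \<sigma> satisfies h, is at least 1 in any
  case, and equals 2 - 1/r when h is not weakly satisfied, where all r colours are distinct.
  Averaging over the hyperedges gives both parts, the second even with \<epsilon> in place of 2\<epsilon>.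
\<close>

lemma scaled_norm_2_sq:
  fixes x :: "'e \<Rightarrow> real^'d"
  shows "(scaled_norm 2 E x)\<^sup>2 = (\<Sum>h\<in>E. (norm (x h))\<^sup>2) / real (card E)"
proof -
  have "\<bar>a\<bar> powr 2 = a\<^sup>2" for a :: real
    by simp
  moreover have "(norm y)\<^sup>2 = (\<Sum>i\<in>UNIV. (y $ i)\<^sup>2)" for y :: "real^'d"
    by (simp add: norm_vec_def L2_set_def sum_nonneg)
  ultimately show ?thesis
    unfolding scaled_norm_def by (simp add: powr_half_sqrt sum_nonneg)
qed

lemma mlprod_pair [simp]: "mlprod [u, v] = inner u v"
  by (simp add: mlprod_def inner_vec_def)

lemma vector_system_inner:
  assumes "vector_system r C 2 vs" "j < r" "k < r" "c \<in> C" "c' \<in> C"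
  shows "inner (vs j c) (vs k c') =
           (if (j, c) = (k, c') then 1 / real r else if c = c' then 0 else 1 / (real r)\<^sup>2)"
proof -
  let ?xs = "[(j, c), (k, c')]"
  have "mlprod (map (\<lambda>(j, c). vs j c) ?xs) =
          (if \<exists>a\<in>set ?xs. \<exists>b\<in>set ?xs. a \<noteq> b \<and> snd a = snd b then 0
           else 1 / real r ^ card (set ?xs))"
    using assms(1) unfolding vector_system_def
    by (elim conjE allE[of _ ?xs] impE) (use assms(2-5) in auto)
  then show ?thesis
    by (cases "(j, c) = (k, c')") (auto simp: power2_eq_square)
qed

lemma norm_sum_vector_system_sq:
  assumes vs: "vector_system r C 2 vs" and r: "r > 0" and c: "\<forall>j<r. c j \<in> C"
  shows "(norm (\<Sum>j<r. vs j (c j)))\<^sup>2 =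
           1 + (\<Sum>j<r. \<Sum>k<r. if c j = c k then 0 else 1) / (real r)\<^sup>2"
proof -
  have "(norm (\<Sum>j<r. vs j (c j)))\<^sup>2 = (\<Sum>j<r. \<Sum>k<r. inner (vs j (c j)) (vs k (c k)))"
    by (simp add: power2_norm_eq_inner inner_sum_left inner_sum_right) (rule sum.swap)
  also have "\<dots> = (\<Sum>j<r. \<Sum>k<r. (if j = k then 1 / real r else 0)
                                  + (if c j = c k then 0 else 1) / (real r)\<^sup>2)"
    by (intro sum.cong refl) (auto simp: vector_system_inner[OF vs] c)
  also have "\<dots> = 1 + (\<Sum>j<r. \<Sum>k<r. if c j = c k then 0 else 1) / (real r)\<^sup>2"
    using r by (simp add: sum.distrib sum_divide_distrib)
  finally show ?thesis .
qed

lemma norm_sum_vector_system_sq_monochromatic: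
  assumes vs: "vector_system r C 2 vs" and r: "r > 0" and c: "\<forall>j<r. c j \<in> C"
    and mono: "\<And>j k. j < r \<Longrightarrow> k < r \<Longrightarrow> c j = c k"
  shows "(norm (\<Sum>j<r. vs j (c j)))\<^sup>2 = 1"
proof -
  have "(\<Sum>j<r. \<Sum>k<r. if c j = c k then 0 else 1 :: real) = 0"
    by (intro sum.neutral ballI) (simp add: if_P[OF mono])
  then show ?thesis
    by (simp add: norm_sum_vector_system_sq[OF vs r c])
qed

lemma norm_sum_vector_system_sq_ge_1:
  assumes vs: "vector_system r C 2 vs" and r: "r > 0" and c: "\<forall>j<r. c j \<in> C"
  shows "(norm (\<Sum>j<r. vs j (c j)))\<^sup>2 \<ge> 1"
proof -
  have "0 \<le> (\<Sum>j<r. \<Sum>k<r. if c j = c k then 0 else 1 :: real) / (real r)\<^sup>2"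
    by (intro divide_nonneg_nonneg sum_nonneg) auto
  then show ?thesis
    by (simp add: norm_sum_vector_system_sq[OF vs r c])
qed

lemma norm_sum_vector_system_sq_rainbow:
  assumes vs: "vector_system r C 2 vs" and r: "r > 0" and c: "\<forall>j<r. c j \<in> C"
    and inj: "inj_on c {..<r}"
  shows "(norm (\<Sum>j<r. vs j (c j)))\<^sup>2 = 2 - 1 / real r"
proof -
  have "(\<Sum>j<r. \<Sum>k<r. if c j = c k then 0 else 1) =
      (\<Sum>j<r. \<Sum>k<r. 1 - (if j = k then 1 else 0 :: real))"
    using inj by (intro sum.cong refl) (auto simp: inj_on_eq_iff)
  also have "\<dots> = real r * real r - real r"
    by (simp add: sum_subtractf algebra_simps)
  finally have "(norm (\<Sum>j<r. vs j (c j)))\<^sup>2 = 1 + (real r * real r - real r) / (real r)\<^sup>2"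
    by (simp add: norm_sum_vector_system_sq[OF vs r c])
  also have "\<dots> = 2 - 1 / real r"
    using r by (simp add: field_simps power2_eq_square)
  finally show ?thesis .
qed

definition hedge_colour ::
  "('e \<Rightarrow> 'v \<Rightarrow> 'l \<Rightarrow> 'c) \<Rightarrow> ('e \<Rightarrow> nat \<Rightarrow> 'v) \<Rightarrow> ('v \<Rightarrow> 'l) \<Rightarrow> 'e \<Rightarrow> nat \<Rightarrow> 'c" where
  "hedge_colour proj vert \<sigma> h j = proj h (vert h j) (\<sigma> (vert h j))"

definition path_labelling :: "('v \<times> 'l) set \<Rightarrow> 'v \<Rightarrow> 'l" where
  "path_labelling P u = (THE l. (u, l) \<in> P)"

lemma st_path_labelling:
  assumes "st_path V L P"
  shows "\<forall>u\<in>V. (u, path_labelling P u) \<in> P"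
proof
  fix u assume "u \<in> V"
  with assms have "\<exists>!l. (u, l) \<in> P" by (simp add: st_path_def)
  then show "(u, path_labelling P u) \<in> P" unfolding path_labelling_def by (rule theI')
qed

lemma st_path_unique: "st_path V L P \<Longrightarrow> (u, l) \<in> P \<Longrightarrow> (u, l') \<in> P \<Longrightarrow> l = l'"
  unfolding st_path_def by blast

lemma st_path_label_mem: "st_path V L P \<Longrightarrow> (u, l) \<in> P \<Longrightarrow> l \<in> L"
  unfolding st_path_def by blast

lemma assignment_path_labelling: "st_path V L P \<Longrightarrow> assignment V L (path_labelling P)"
  using st_path_labelling st_path_label_mem unfolding assignment_def by metis

lemma st_path_graph: "assignment V L \<sigma> \<Longrightarrow> st_path V L ((\<lambda>u. (u, \<sigma> u)) ` V)"
  by (auto simp: assignment_def st_path_def)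

lemma hedge_colour_mem:
  assumes "hlc_instance r V prt E vert L C proj" "assignment V L \<sigma>" "h \<in> E"
  shows "\<forall>j<r. hedge_colour proj vert \<sigma> h j \<in> C"
  using assms by (auto simp: hlc_instance_def assignment_def hedge_colour_def)

lemma path_cost_hedge:
  assumes hlc: "hlc_instance r V prt E vert L C proj" and P: "st_path V L P"
    and \<sigma>: "\<forall>u\<in>V. (u, \<sigma> u) \<in> P" and h: "h \<in> E"
  shows "path_cost r prt vert proj vs P h = (\<Sum>j<r. vs j (hedge_colour proj vert \<sigma> h j))"
proof -
  let ?e = "\<lambda>j. (vert h j, \<sigma> (vert h j))"
  have vert: "vert h j \<in> V" "prt (vert h j) = j" if "j < r" for j
    using hlc h that by (auto simp: hlc_instance_def)
  have inj: "inj_on ?e {..<r}"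
    using vert(2) by (intro inj_onI) (metis Pair_inject lessThan_iff)
  have "finite P"
    using P hlc unfolding st_path_def hlc_instance_def by (meson finite_SigmaI finite_subset)
  then have "path_cost r prt vert proj vs P h =
      (\<Sum>e\<in>{e\<in>P. in_hedge r vert (fst e) h}. vs (prt (fst e)) (proj h (fst e) (snd e)))"
    by (simp add: path_cost_def edge_cost_def sum.inter_filter)
  also have "{e\<in>P. in_hedge r vert (fst e) h} = ?e ` {..<r}"
  proof (intro set_eqI iffI)
    fix e assume "e \<in> {e\<in>P. in_hedge r vert (fst e) h}"
    then obtain j where j: "j < r" "fst e = vert h j" and e: "e \<in> P"
      by (auto simp: in_hedge_def)
    have "(vert h j, snd e) \<in> P"
      using e j(2) by (metis prod.collapse)
    then have "snd e = \<sigma> (vert h j)"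
      using st_path_unique[OF P] \<sigma> vert(1)[OF j(1)] by blast
    then have "e = ?e j"
      using j(2) by (simp add: prod_eq_iff)
    then show "e \<in> ?e ` {..<r}" using j by blast
  next
    fix e assume "e \<in> ?e ` {..<r}"
    then show "e \<in> {e\<in>P. in_hedge r vert (fst e) h}"
      using \<sigma> vert by (auto simp: in_hedge_def)
  qed
  also have "(\<Sum>e\<in>?e ` {..<r}. vs (prt (fst e)) (proj h (fst e) (snd e))) =
      (\<Sum>j<r. vs j (hedge_colour proj vert \<sigma> h j))"
    using inj by (simp add: sum.reindex vert hedge_colour_def)
  finally show ?thesis .
qed

lemma scaled_norm_path_cost_satisfying:
  assumes hlc: "hlc_instance r V prt E vert L C proj" and vs: "vector_system r C 2 vs"
    and r: "r > 0" and E: "E \<noteq> {}"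
    and \<sigma>: "assignment V L \<sigma>" and sat: "\<forall>h\<in>E. satisfies r vert proj \<sigma> h"
  shows "(scaled_norm 2 E (path_cost r prt vert proj vs ((\<lambda>u. (u, \<sigma> u)) ` V)))\<^sup>2 = 1"
proof -
  have "(norm (path_cost r prt vert proj vs ((\<lambda>u. (u, \<sigma> u)) ` V) h))\<^sup>2 = 1" if h: "h \<in> E" for h
  proof -
    have "\<forall>u\<in>V. (u, \<sigma> u) \<in> (\<lambda>u. (u, \<sigma> u)) ` V"
      by blast
    note cost = path_cost_hedge[OF hlc st_path_graph[OF \<sigma>] this h]
    have "hedge_colour proj vert \<sigma> h j = hedge_colour proj vert \<sigma> h k" if "j < r" "k < r" for j k
      using sat h that unfolding satisfies_def hedge_colour_def by blast
    then show ?thesis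
      unfolding cost
      by (rule norm_sum_vector_system_sq_monochromatic[OF vs r hedge_colour_mem[OF hlc \<sigma> h]])
  qed
  moreover have "finite E"
    using hlc by (simp add: hlc_instance_def)
  ultimately show ?thesis
    using E by (simp add: scaled_norm_2_sq)
qed

lemma scaled_norm_path_cost_ge_weakly_satisfied:
  assumes hlc: "hlc_instance r V prt E vert L C proj" and vs: "vector_system r C 2 vs"
    and r: "r > 0" and E: "E \<noteq> {}" and P: "st_path V L P"
  shows "(scaled_norm 2 E (path_cost r prt vert proj vs P))\<^sup>2 \<ge>
           2 - 1 / real r
           - real (card {h\<in>E. weakly_satisfies r vert proj (path_labelling P) h}) / real (card E)"
proof -
  let ?\<sigma> = "path_labelling P"
  define W where "W = {h\<in>E. weakly_satisfies r vert proj ?\<sigma> h}"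
  have finE: "finite E" and "card E > 0"
    using hlc E by (auto simp: hlc_instance_def card_gt_0_iff)
  have bound:
    "(norm (path_cost r prt vert proj vs P h))\<^sup>2 \<ge> 2 - 1 / real r - (if h \<in> W then 1 else 0)"
    if h: "h \<in> E" for h
  proof -
    note colours = hedge_colour_mem[OF hlc assignment_path_labelling[OF P] h]
    have cost: "path_cost r prt vert proj vs P h = (\<Sum>j<r. vs j (hedge_colour proj vert ?\<sigma> h j))"
      by (rule path_cost_hedge[OF hlc P st_path_labelling[OF P] h])
    show ?thesis
    proof (cases "h \<in> W")
      case True
      have "1 \<le> (norm (path_cost r prt vert proj vs P h))\<^sup>2"
        unfolding cost by (rule norm_sum_vector_system_sq_ge_1[OF vs r colours])
      moreover have "0 \<le> 1 / real r"
        by simp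
      ultimately show ?thesis
        unfolding if_P[OF True] by linarith
    next
      case False
      then have "inj_on (hedge_colour proj vert ?\<sigma> h) {..<r}"
        using h by (auto simp: inj_on_def W_def weakly_satisfies_def hedge_colour_def)
      then show ?thesis
        using False unfolding cost by (simp add: norm_sum_vector_system_sq_rainbow[OF vs r colours])
    qed
  qed
  have "real (card E) * (2 - 1 / real r) - real (card W) =
      (\<Sum>h\<in>E. 2 - 1 / real r - (if h \<in> W then 1 else 0))"
    using finE by (simp add: sum_subtractf sum.If_cases W_def Int_def)
  also have "\<dots> \<le> (\<Sum>h\<in>E. (norm (path_cost r prt vert proj vs P h))\<^sup>2)"
    using bound by (rule sum_mono)
  finally have "(real (card E) * (2 - 1 / real r) - real (card W)) / real (card E) \<le>
      (\<Sum>h\<in>E. (norm (path_cost r prt vert proj vs P h))\<^sup>2) / real (card E)"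
    by (rule divide_right_mono) simp
  with \<open>card E > 0\<close> show ?thesis
    unfolding scaled_norm_2_sq W_def by (simp add: field_simps)
qed

theorem lemma4p1:
  fixes r :: nat and V :: "'v set" and prt :: "'v \<Rightarrow> nat"
    and E :: "'e set" and vert :: "'e \<Rightarrow> nat \<Rightarrow> 'v"
    and L :: "'l set" and C :: "'c set" and proj :: "'e \<Rightarrow> 'v \<Rightarrow> 'l \<Rightarrow> 'c"
    and vs :: "nat \<Rightarrow> 'c \<Rightarrow> real^'d" and \<epsilon> :: real
  assumes "r \<ge> 2"
    and "hlc_instance r V prt E vert L C proj"
    and "E \<noteq> {}"
    and "vector_system r C 2 vs"
  shows "((\<exists>\<sigma>. assignment V L \<sigma> \<and> (\<forall>h\<in>E. satisfies r vert proj \<sigma> h)) \<longrightarrow>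
           (\<exists>P. st_path V L P \<and> (scaled_norm 2 E (path_cost r prt vert proj vs P))\<^sup>2 = 1))
       \<and> ((\<forall>\<sigma>. assignment V L \<sigma> \<longrightarrow>
              real (card {h\<in>E. weakly_satisfies r vert proj \<sigma> h}) \<le> \<epsilon> * real (card E)) \<longrightarrow>
           (\<forall>P. st_path V L P \<longrightarrow>
              (scaled_norm 2 E (path_cost r prt vert proj vs P))\<^sup>2 \<ge> 2 - (1 / real r + 2 * \<epsilon>)))"
proof -
  from assms(1) have r: "r > 0"
    by simp
  show ?thesis
  proof (intro conjI impI allI)
    assume "\<exists>\<sigma>. assignment V L \<sigma> \<and> (\<forall>h\<in>E. satisfies r vert proj \<sigma> h)"
    then obtain \<sigma> where "assignment V L \<sigma>" "\<forall>h\<in>E. satisfies r vert proj \<sigma> h"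
      by blast
    then show "\<exists>P. st_path V L P \<and> (scaled_norm 2 E (path_cost r prt vert proj vs P))\<^sup>2 = 1"
      using st_path_graph scaled_norm_path_cost_satisfying[OF assms(2,4) r assms(3)] by blast
  next
    fix P
    assume gap: "\<forall>\<sigma>. assignment V L \<sigma> \<longrightarrow>
        real (card {h\<in>E. weakly_satisfies r vert proj \<sigma> h}) \<le> \<epsilon> * real (card E)"
      and P: "st_path V L P"
    let ?w = "real (card {h\<in>E. weakly_satisfies r vert proj (path_labelling P) h}) / real (card E)"
    have "card E > 0"
      using assms(2,3) by (simp add: hlc_instance_def card_gt_0_iff)
    then have "?w \<le> \<epsilon>"
      using gap assignment_path_labelling[OF P] by (simp add: divide_le_eq mult.commute)
    moreover have "0 \<le> ?w"
      by simp
    moreover have "2 - 1 / real r - ?w \<le> (scaled_norm 2 E (path_cost r prt vert proj vs P))\<^sup>2"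
      by (rule scaled_norm_path_cost_ge_weakly_satisfied[OF assms(2,4) r assms(3) P])
    ultimately show "(scaled_norm 2 E (path_cost r prt vert proj vs P))\<^sup>2 \<ge> 2 - (1 / real r + 2 * \<epsilon>)"
      by linarith
  qed
qed

end
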